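(* Let $\Pi$ be a finite set of proposition symbols, $I=[a]$ with $a$ a positive integer, and $n\in\mathbb N$. Two finite pointed $(\Pi,I)$-models $(M,w)$ and $(N,v)$ satisfy exactly the same full graded multimodal $(\Pi,I)$-type of modal depth $n$ if and only if, for every counting multichannel message passing automaton $A$ for $(\Pi,I)$ and every round $t\le n$, the state of $A$ at $w$ in $M$ in round $t$ equals the state of $A$ at $v$ in $N$ in round $t$.
   Context: $(\Pi,I)$-formulae of graded multimodal logic are generated by $\varphi ::= \top \mid p \mid \neg\varphi \mid (\varphi\land\varphi) \mid \langle\alpha\rangle_{\geq k}\varphi$ ($p\in\Pi$, $\alpha\in I$, $k\in\mathbb N$); $\langle\alpha\rangle_{=k}\varphi$ abbreviates $\langle\alpha\rangle_{\geq k}\varphi\land\neg\langle\alpha\rangle_{\geq k+1}\varphi$. A $(\Pi,I)$-model is $M=(W,(R_\alpha)_{\alpha\in I},V)$ with $W$ nonempty finite, $R_\alpha\subseteq W\times W$, $V\colon\Pi\to\wp(W)$; pointed model $(M,w)$; $\mathcal N^\alpha(w)=\{u:(w,u)\in R_\alpha\}$. Semantics standard, $(M,w)\models\langle\alpha\rangle_{\geq k}\psi$ iff $|\{u\in\mathcal N^\alpha(w):(M,u)\models\psi\}|\geq k$. Full graded multimodal types: $\tau^{(M,w)}_\varepsilon$ is the canonically ordered conjunction of $p$ ($p\in\Pi$, $w\in V(p)$) and $\neg p$ ($p\in\Pi$, $w\notin V(p)$), $\top$ if $\Pi=\emptyset$. For widths $\mathbf k=(\mathbf k_1,\dots,\mathbf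 k_n)$, $\mathbf k_i\in\mathbb N^{|I|}$, $T_{\mathbf k}$ is the set of all types of width $\mathbf k$ of finite pointed models, and for $\mathbf k_0=(k_1,\dots,k_{|I|})$, $\tau^{(M,w)}_{(\mathbf k_0,\mathbf k)}$ is the canonical conjunction of $\tau^{(M,w)}_\varepsilon$, all $\langle\alpha\rangle_{=\ell}\tau$ ($1\le\ell\le k_\alpha-1$, $\tau\in T_{\mathbf k}$) true at $(M,w)$, all $\langle\alpha\rangle_{\geq k_\alpha}\tau$ ($\tau\in T_{\mathbf k}$) true at $(M,w)$, and all $\langle\alpha\rangle_{=|\mathcal N^\alpha(w)|}\top$ with $k_\alpha>|\mathcal N^\alpha(w)|$. The full type of depth $0$ is $\tau^{(M,w)}_0=\tau^{(M,w)}_\varepsilon$; the full type of depth $n+1$ is $\tau^{(M,w)}_{n+1}=\tau^{(M,w)}_{(\mathbf k_1,\dots,\mathbf k_{n+1})}$ for any widths with $k_{i,\alpha}>\max\{|\mathcal N^\alpha(u)|:(w,u)\in(\bigcup_\beta R_\beta)^{i-1}\}$ for all $i\in[n+1]$, $\alpha\in I$. A multiset over $X$ is a function $X\to\mathbb N$; $\mathfrak m(X)$ is the set of multisets over $X$. A counting multichannel message passing automaton for $(\Pi,I)$ is $A=(Q,\pi,\delta,F)$ with $Q$ a nonempty countable set, $\pi\colon\wp(\Pi)\to Q$, $\delta\colon\mathfrak m(Q)^{|I|}\times Q\to Q$, $F\subseteq Q$. Its states on a finite model $M$ are given by $f_0(w)=\pi(\{p\in\Pi:w\in V(p)\})$ and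 $f_{t+1}(w)=\delta(N_1,\dots,N_{|I|},f_t(w))$, where $N_\alpha$ is the multiset of values $f_t(u)$ for $u\in\mathcal N^\alpha(w)$; $f_t(w)$ is the state at $w$ in round $t$. *)

theory Defs
  imports Main "HOL-Library.Countable" "HOL-Library.Multiset"
begin

text \<open>Formulas over proposition symbols of type 'p; channels are natural numbers,
  the index set is I = [a] = {1..a}.  Dia al k phi is the graded diamond
  with grade at least k.\<close>

datatype 'p gform =
    GTop
  | GAtom 'p
  | GNeg "'p gform"
  | GAnd "'p gform" "'p gform"
  | GDia nat nat "'p gform"

instance gform :: (countable) countable
  by countable_datatype

definition GDiaEq :: "nat \<Rightarrow> nat \<Rightarrow> 'p gform \<Rightarrow> 'p gform" where
  "GDiaEq al k phi = GAnd (GDia al k phi) (GNeg (GDia al (Suc k) phi))"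

type_synonym ('p, 'w) kmodel = "'w set \<times> (nat \<Rightarrow> ('w \<times> 'w) set) \<times> ('p \<Rightarrow> 'w set)"

definition Wor :: "('p, 'w) kmodel \<Rightarrow> 'w set" where "Wor M = fst M"
definition Rel :: "('p, 'w) kmodel \<Rightarrow> nat \<Rightarrow> ('w \<times> 'w) set" where "Rel M = fst (snd M)"
definition Val :: "('p, 'w) kmodel \<Rightarrow> 'p \<Rightarrow> 'w set" where "Val M = snd (snd M)"

definition is_model :: "'p set \<Rightarrow> nat \<Rightarrow> ('p, 'w) kmodel \<Rightarrow> bool" where
  "is_model Pi a M \<longleftrightarrow> finite (Wor M) \<and> Wor M \<noteq> {}
     \<and> (\<forall>al\<in>{1..a}. Rel M al \<subseteq> Wor M \<times> Wor M)
     \<and> (\<forall>p\<in>Pi. Val M p \<subseteq> Wor M)"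

definition nbh :: "('p, 'w) kmodel \<Rightarrow> nat \<Rightarrow> 'w \<Rightarrow> 'w set" where
  "nbh M al w = {u. (w, u) \<in> Rel M al}"

fun holds :: "('p, 'w) kmodel \<Rightarrow> 'w \<Rightarrow> 'p gform \<Rightarrow> bool" where
  "holds M w GTop = True"
| "holds M w (GAtom p) = (w \<in> Val M p)"
| "holds M w (GNeg phi) = (\<not> holds M w phi)"
| "holds M w (GAnd phi psi) = (holds M w phi \<and> holds M w psi)"
| "holds M w (GDia al k phi) = (k \<le> card {u \<in> nbh M al w. holds M u phi})"

definition canon :: "'p::countable gform set \<Rightarrow> 'p gform list" where
  "canon S = map from_nat (sorted_list_of_set (to_nat ` S))"

fun conj_list :: "'p gform list \<Rightarrow> 'p gform" where
  "conj_list [] = GTop"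
| "conj_list [x] = x"
| "conj_list (x # xs) = GAnd x (conj_list xs)"

definition canon_conj :: "'p::countable gform set \<Rightarrow> 'p gform" where
  "canon_conj S = conj_list (canon S)"

definition tau_eps :: "'p::countable set \<Rightarrow> ('p, 'w) kmodel \<Rightarrow> 'w \<Rightarrow> 'p gform" where
  "tau_eps Pi M w = canon_conj ({GAtom p | p. p \<in> Pi \<and> w \<in> Val M p}
                             \<union> {GNeg (GAtom p) | p. p \<in> Pi \<and> w \<notin> Val M p})"

text \<open>The type of width (k0, ks), given the set T = T_ks of types of width ks.
  A width vector in N^|I| is a function nat => nat, only its values on {1..a} matter.\<close>

definition build :: "'p::countable set \<Rightarrow> nat \<Rightarrow> (nat \<Rightarrow> nat) \<Rightarrow> 'p gform set
                      \<Rightarrow> ('p, 'w) kmodel \<Rightarrow> 'w \<Rightarrow> 'p gform" where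
  "build Pi a k0 T M w = canon_conj (
       {tau_eps Pi M w}
     \<union> {GDiaEq al l t | al l t. al \<in> {1..a} \<and> 1 \<le> l \<and> l \<le> k0 al - 1 \<and> t \<in> T
                                  \<and> holds M w (GDiaEq al l t)}
     \<union> {GDia al (k0 al) t | al t. al \<in> {1..a} \<and> t \<in> T \<and> holds M w (GDia al (k0 al) t)}
     \<union> {GDiaEq al (card (nbh M al w)) GTop | al. al \<in> {1..a} \<and> k0 al > card (nbh M al w)})"

text \<open>T_ks: the set of all types of width ks of finite pointed models.  Every finite
  model is isomorphic to one whose worlds are natural numbers, so we range over those.\<close>

primrec Ttypes :: "'p::countable set \<Rightarrow> nat \<Rightarrow> (nat \<Rightarrow> nat) list \<Rightarrow> 'p gform set" where
  "Ttypes Pi a [] = {tau_eps Pi M w | (M :: ('p, nat) kmodel) w. is_model Pi a M \<and> w \<in> Wor M}"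
| "Ttypes Pi a (k0 # ks) = {build Pi a k0 (Ttypes Pi a ks) M w | (M :: ('p, nat) kmodel) w.
                              is_model Pi a M \<and> w \<in> Wor M}"

fun tau :: "'p::countable set \<Rightarrow> nat \<Rightarrow> (nat \<Rightarrow> nat) list \<Rightarrow> ('p, 'w) kmodel \<Rightarrow> 'w \<Rightarrow> 'p gform" where
  "tau Pi a [] M w = tau_eps Pi M w"
| "tau Pi a (k0 # ks) M w = build Pi a k0 (Ttypes Pi a ks) M w"

text \<open>Admissible widths for (M, w): k_{i,al} > |N^al(u)| for all u reachable from w in
  exactly i-1 steps of the union of the relations (0-based list index i here).\<close>

definition admissible :: "nat \<Rightarrow> (nat \<Rightarrow> nat) list \<Rightarrow> ('p, 'w) kmodel \<Rightarrow> 'w \<Rightarrow> bool" where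
  "admissible a ks M w \<longleftrightarrow>
     (\<forall>i < length ks. \<forall>u. (w, u) \<in> (\<Union>be\<in>{1..a}. Rel M be) ^^ i \<longrightarrow>
        (\<forall>al\<in>{1..a}. card (nbh M al u) < (ks ! i) al))"

definition same_full_type :: "'p::countable set \<Rightarrow> nat \<Rightarrow> nat \<Rightarrow> ('p, 'w) kmodel \<Rightarrow> 'w
                                 \<Rightarrow> ('p, 'v) kmodel \<Rightarrow> 'v \<Rightarrow> bool" where
  "same_full_type Pi a n M w N v \<longleftrightarrow>
     (\<forall>ks. length ks = n \<and> admissible a ks M w \<and> admissible a ks N v
            \<longrightarrow> tau Pi a ks M w = tau Pi a ks N v)"

text \<open>An automaton (Q, pi, delta, F); the countable state set Q is represented as a
  set of natural numbers.  delta receives the list of the |I| = a multisets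
  (channel al at list position al - 1) and the current state.\<close>

definition is_cmpa :: "'p set \<Rightarrow> nat \<Rightarrow> ('p set \<Rightarrow> nat) \<times> (nat multiset list \<Rightarrow> nat \<Rightarrow> nat) \<Rightarrow> nat set \<Rightarrow> nat set \<Rightarrow> bool" where
  "is_cmpa Pi a pd Q F \<longleftrightarrow> Q \<noteq> {} \<and> F \<subseteq> Q
     \<and> (\<forall>S. S \<subseteq> Pi \<longrightarrow> fst pd S \<in> Q)
     \<and> (\<forall>Ns q. length Ns = a \<and> (\<forall>X\<in>set Ns. set_mset X \<subseteq> Q) \<and> q \<in> Q \<longrightarrow> snd pd Ns q \<in> Q)"

fun run :: "'p set \<Rightarrow> nat \<Rightarrow> ('p set \<Rightarrow> nat) \<Rightarrow> (nat multiset list \<Rightarrow> nat \<Rightarrow> nat)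
              \<Rightarrow> ('p, 'w) kmodel \<Rightarrow> nat \<Rightarrow> 'w \<Rightarrow> nat" where
  "run Pi a pi delta M 0 w = pi {p \<in> Pi. w \<in> Val M p}"
| "run Pi a pi delta M (Suc t) w =
     delta (map (\<lambda>al. image_mset (run Pi a pi delta M t) (mset_set (nbh M al w))) [1..<Suc a])
           (run Pi a pi delta M t w)"

end

theory Submission
  imports Defs
begin

(* Once every width exceeds all out-degrees of the models involved, a type t of width ks holds at a
   point exactly when t is the type of that point: the counting conjuncts of t bound the number of
   successors of each type of the next smaller width from below, and since every successor satisfies
   exactly one such type the bounds are tight.  Hence equal types of width k0 # ks give, on every
   channel, equal multisets of successor types of width ks, and by induction on the round the state
   of any automaton at a point is a function of its type.
   Conversely, the automaton with injective initial and transition maps records the whole unravelled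
   neighbourhood: equal states in round n give agreement on all formulas of modal depth at most n,
   and the types of depth n are such formulas. *)

lemma count_image_mset_mset_set:
  assumes "finite A"
  shows "count (image_mset f (mset_set A)) c = card {a \<in> A. f a = c}"
proof -
  have "f -` {c} \<inter> A = {a \<in> A. f a = c}" by auto
  then show ?thesis using assms by (simp add: count_image_mset)
qed

lemma image_mset_eq_factor:
  assumes eq: "image_mset g A = image_mset g' B"
    and factor: "\<And>a b. a \<in># A \<Longrightarrow> b \<in># B \<Longrightarrow> g a = g' b \<Longrightarrow> r a = r' b"
  shows "image_mset r A = image_mset r' B"
proof -
  define h where "h c = r' (SOME b. b \<in># B \<and> g' b = c)" for c
  have hA: "r a = h (g a)" if a: "a \<in># A" for a
  proof -
    have "g a \<in># image_mset g' B" using a eq[symmetric] by simp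
    then have "\<exists>b. b \<in># B \<and> g' b = g a" by auto
    then have "(SOME b. b \<in># B \<and> g' b = g a) \<in># B \<and> g' (SOME b. b \<in># B \<and> g' b = g a) = g a"
      by (rule someI_ex)
    then show ?thesis unfolding h_def using factor[OF a] by simp
  qed
  have hB: "r' b = h (g' b)" if b: "b \<in># B" for b
  proof -
    have "g' b \<in># image_mset g A" using b eq by simp
    then obtain a where "a \<in># A" "g a = g' b" by auto
    then show ?thesis using hA factor b by metis
  qed
  have "image_mset r A = image_mset h (image_mset g A)"
    using hA by (simp add: image_mset.compositionality cong: image_mset_cong)
  also have "\<dots> = image_mset h (image_mset g' B)" by (simp only: eq)
  also have "\<dots> = image_mset r' B"
    using hB by (simp add: image_mset.compositionality cong: image_mset_cong)
  finally show ?thesis .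
qed

lemma card_filter_eq_if_image_mset_eq:
  assumes "finite A" "finite B"
    and "image_mset g (mset_set A) = image_mset g' (mset_set B)"
    and "\<And>a b. a \<in> A \<Longrightarrow> b \<in> B \<Longrightarrow> g a = g' b \<Longrightarrow> P a = Q b"
  shows "card {a \<in> A. P a} = card {b \<in> B. Q b}"
proof -
  have "image_mset P (mset_set A) = image_mset Q (mset_set B)"
    by (rule image_mset_eq_factor[OF assms(3)]) (use assms in auto)
  then show ?thesis
    using count_image_mset_mset_set[of A P True] count_image_mset_mset_set[of B Q True] assms
    by simp
qed

lemma sum_card_fibers_le:
  assumes "finite A" "finite T"
  shows "(\<Sum>t\<in>T. card {u \<in> A. g u = t}) \<le> card A"
proof -
  have "(\<Sum>t\<in>T. card {u \<in> A. g u = t}) = card (\<Union>t\<in>T. {u \<in> A. g u = t})"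
    by (rule card_UN_disjoint[symmetric]) (use assms in auto)
  also have "\<dots> \<le> card A" by (rule card_mono) (use assms in auto)
  finally show ?thesis .
qed

lemma card_le_sum_card_filter:
  assumes "finite A" "finite T" "\<forall>u\<in>A. \<exists>t\<in>T. P u t"
  shows "card A \<le> (\<Sum>t\<in>T. card {u \<in> A. P u t})"
proof -
  have "card A \<le> card (\<Union>t\<in>T. {u \<in> A. P u t})"
    by (rule card_mono) (use assms in auto)
  also have "\<dots> \<le> (\<Sum>t\<in>T. card {u \<in> A. P u t})" by (rule card_UN_le) (rule assms)
  finally show ?thesis .
qed

fun gform_depth :: "'p gform \<Rightarrow> nat" where
  "gform_depth GTop = 0"
| "gform_depth (GAtom p) = 0"
| "gform_depth (GNeg \<phi>) = gform_depth \<phi>"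
| "gform_depth (GAnd \<phi> \<psi>) = max (gform_depth \<phi>) (gform_depth \<psi>)"
| "gform_depth (GDia al k \<phi>) = Suc (gform_depth \<phi>)"

fun wf_gform :: "'p set \<Rightarrow> nat \<Rightarrow> 'p gform \<Rightarrow> bool" where
  "wf_gform Pi a GTop = True"
| "wf_gform Pi a (GAtom p) = (p \<in> Pi)"
| "wf_gform Pi a (GNeg \<phi>) = wf_gform Pi a \<phi>"
| "wf_gform Pi a (GAnd \<phi> \<psi>) = (wf_gform Pi a \<phi> \<and> wf_gform Pi a \<psi>)"
| "wf_gform Pi a (GDia al k \<phi>) = (al \<in> {1..a} \<and> wf_gform Pi a \<phi>)"

definition modal_equiv :: "'p set \<Rightarrow> nat \<Rightarrow> nat \<Rightarrow> ('p, 'w) kmodel \<Rightarrow> 'w \<Rightarrow> ('p, 'v) kmodel \<Rightarrow> 'v \<Rightarrow> bool"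
  where "modal_equiv Pi a d M x N y \<longleftrightarrow>
    (\<forall>\<phi>. wf_gform Pi a \<phi> \<and> gform_depth \<phi> \<le> d \<longrightarrow> holds M x \<phi> = holds N y \<phi>)"

abbreviation succ_card :: "('p, 'w) kmodel \<Rightarrow> nat \<Rightarrow> 'w \<Rightarrow> 'p gform \<Rightarrow> nat" where
  "succ_card M al x \<phi> \<equiv> card {u \<in> nbh M al x. holds M u \<phi>}"

abbreviation true_atoms :: "'p set \<Rightarrow> ('p, 'w) kmodel \<Rightarrow> 'w \<Rightarrow> 'p set" where
  "true_atoms Pi M x \<equiv> {p \<in> Pi. x \<in> Val M p}"

lemma holds_GDiaEq: "holds M x (GDiaEq al l \<phi>) \<longleftrightarrow> succ_card M al x \<phi> = l"
  by (auto simp: GDiaEq_def)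

lemma succ_card_eqI:
  assumes "\<forall>k. holds M x (GDia al k \<phi>) = holds N y (GDia al k \<phi>)"
  shows "succ_card M al x \<phi> = succ_card N al y \<phi>"
proof -
  have "succ_card M al x \<phi> \<le> succ_card N al y \<phi>"
    using assms[rule_format, of "succ_card M al x \<phi>"] by simp
  moreover have "succ_card N al y \<phi> \<le> succ_card M al x \<phi>"
    using assms[rule_format, of "succ_card N al y \<phi>"] by simp
  ultimately show ?thesis by (rule le_antisym)
qed

lemma nbh_subset_Wor: "is_model Pi a M \<Longrightarrow> al \<in> {1..a} \<Longrightarrow> nbh M al x \<subseteq> Wor M"
  unfolding is_model_def nbh_def by blast

lemma finite_nbh: "is_model Pi a M \<Longrightarrow> al \<in> {1..a} \<Longrightarrow> finite (nbh M al x)"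
  using nbh_subset_Wor is_model_def finite_subset by metis

lemma card_nbh_le: "is_model Pi a M \<Longrightarrow> al \<in> {1..a} \<Longrightarrow> card (nbh M al x) \<le> card (Wor M)"
  by (rule card_mono) (auto simp: is_model_def nbh_def)

lemma holds_conj_list: "holds M x (conj_list \<phi>s) \<longleftrightarrow> (\<forall>\<phi>\<in>set \<phi>s. holds M x \<phi>)"
  by (induction \<phi>s rule: conj_list.induct) auto

lemma wf_conj_list: "\<forall>\<phi>\<in>set \<phi>s. wf_gform Pi a \<phi> \<Longrightarrow> wf_gform Pi a (conj_list \<phi>s)"
  by (induction \<phi>s rule: conj_list.induct) auto

lemma depth_conj_list: "\<forall>\<phi>\<in>set \<phi>s. gform_depth \<phi> \<le> d \<Longrightarrow> gform_depth (conj_list \<phi>s) \<le> d"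
  by (induction \<phi>s rule: conj_list.induct) auto

lemma set_canon: "finite S \<Longrightarrow> set (canon S) = S"
  by (simp add: canon_def image_image)

lemma set_canon_subset: "set (canon S) \<subseteq> S"
proof (cases "finite S")
  case False
  then have "infinite (to_nat ` S)" using finite_imageD inj_to_nat inj_on_subset by blast
  then show ?thesis by (simp add: canon_def)
qed (simp add: set_canon)

lemma holds_canon_conj: "finite S \<Longrightarrow> holds M x (canon_conj S) \<longleftrightarrow> (\<forall>\<phi>\<in>S. holds M x \<phi>)"
  by (simp add: canon_conj_def holds_conj_list set_canon)

lemma wf_canon_conj: "\<forall>\<phi>\<in>S. wf_gform Pi a \<phi> \<Longrightarrow> wf_gform Pi a (canon_conj S)"
  unfolding canon_conj_def by (rule wf_conj_list) (use set_canon_subset in blast)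

lemma depth_canon_conj: "\<forall>\<phi>\<in>S. gform_depth \<phi> \<le> d \<Longrightarrow> gform_depth (canon_conj S) \<le> d"
  unfolding canon_conj_def by (rule depth_conj_list) (use set_canon_subset in blast)

definition literals :: "'p set \<Rightarrow> ('p, 'w) kmodel \<Rightarrow> 'w \<Rightarrow> 'p gform set" where
  "literals Pi M x =
     {GAtom p |p. p \<in> Pi \<and> x \<in> Val M p} \<union> {GNeg (GAtom p) |p. p \<in> Pi \<and> x \<notin> Val M p}"

lemma tau_eps_eq_canon_conj: "tau_eps Pi M x = canon_conj (literals Pi M x)"
  by (simp add: tau_eps_def literals_def)

lemma literals_subset: "literals Pi M x \<subseteq> GAtom ` Pi \<union> GNeg ` GAtom ` Pi"
  unfolding literals_def by blast

lemma tau_eps_eqI: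
  assumes "true_atoms Pi M x = true_atoms Pi N y"
  shows "tau_eps Pi M x = tau_eps Pi N y"
proof -
  have "{GAtom p |p. p \<in> Pi \<and> x \<in> Val M p} = {GAtom p |p. p \<in> Pi \<and> y \<in> Val N p}"
    and "{GNeg (GAtom p) |p. p \<in> Pi \<and> x \<notin> Val M p} = {GNeg (GAtom p) |p. p \<in> Pi \<and> y \<notin> Val N p}"
    using assms by blast+
  then show ?thesis by (simp only: tau_eps_def)
qed

lemma holds_literals_iff:
  "(\<forall>\<phi>\<in>literals Pi M x. holds N y \<phi>) \<longleftrightarrow> (\<forall>p\<in>Pi. y \<in> Val N p \<longleftrightarrow> x \<in> Val M p)"
proof
  assume lits: "\<forall>\<phi>\<in>literals Pi M x. holds N y \<phi>"
  show "\<forall>p\<in>Pi. y \<in> Val N p \<longleftrightarrow> x \<in> Val M p"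
  proof
    fix p assume p: "p \<in> Pi"
    show "y \<in> Val N p \<longleftrightarrow> x \<in> Val M p"
    proof (cases "x \<in> Val M p")
      case True
      then have "GAtom p \<in> literals Pi M x" using p unfolding literals_def by blast
      then have "holds N y (GAtom p)" using lits by blast
      then show ?thesis using True by simp
    next
      case False
      then have "GNeg (GAtom p) \<in> literals Pi M x" using p unfolding literals_def by blast
      then have "holds N y (GNeg (GAtom p))" using lits by blast
      then show ?thesis using False by simp
    qed
  qed
next
  assume agree: "\<forall>p\<in>Pi. y \<in> Val N p \<longleftrightarrow> x \<in> Val M p"
  show "\<forall>\<phi>\<in>literals Pi M x. holds N y \<phi>"
  proof
    fix \<phi> assume "\<phi> \<in> literals Pi M x"
    then show "holds N y \<phi>" unfolding literals_def
    proof
      assume "\<phi> \<in> {GAtom p |p. p \<in> Pi \<and> x \<in> Val M p}"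
      then obtain p where "p \<in> Pi" "x \<in> Val M p" "\<phi> = GAtom p" by blast
      then show ?thesis using agree by simp
    next
      assume "\<phi> \<in> {GNeg (GAtom p) |p. p \<in> Pi \<and> x \<notin> Val M p}"
      then obtain p where "p \<in> Pi" "x \<notin> Val M p" "\<phi> = GNeg (GAtom p)" by blast
      then show ?thesis using agree by simp
    qed
  qed
qed

lemma holds_tau_eps_iff:
  assumes "finite Pi"
  shows "holds N y (tau_eps Pi M x) \<longleftrightarrow> true_atoms Pi N y = true_atoms Pi M x"
proof -
  have "finite (literals Pi M x)"
    using literals_subset assms by (meson finite_UnI finite_imageI finite_subset)
  then have "holds N y (tau_eps Pi M x) \<longleftrightarrow> (\<forall>\<phi>\<in>literals Pi M x. holds N y \<phi>)"
    unfolding tau_eps_eq_canon_conj by (rule holds_canon_conj)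
  also have "\<dots> \<longleftrightarrow> true_atoms Pi N y = true_atoms Pi M x"
    unfolding holds_literals_iff by (auto simp: set_eq_iff)
  finally show ?thesis .
qed

lemma wf_depth_literals:
  assumes "\<phi> \<in> literals Pi M x"
  shows "wf_gform Pi a \<phi> \<and> gform_depth \<phi> = 0"
proof -
  have "\<phi> \<in> GAtom ` Pi \<union> GNeg ` GAtom ` Pi" by (rule subsetD[OF literals_subset assms])
  then show ?thesis by (elim UnE imageE) simp_all
qed

lemma wf_tau_eps: "wf_gform Pi a (tau_eps Pi M x)"
  unfolding tau_eps_eq_canon_conj by (rule wf_canon_conj) (simp add: wf_depth_literals)

lemma depth_tau_eps: "gform_depth (tau_eps Pi M x) = 0"
proof -
  have "gform_depth (tau_eps Pi M x) \<le> 0"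
    unfolding tau_eps_eq_canon_conj by (rule depth_canon_conj) (simp add: wf_depth_literals)
  then show ?thesis by simp
qed

definition build_conjuncts :: "'p::countable set \<Rightarrow> nat \<Rightarrow> (nat \<Rightarrow> nat) \<Rightarrow> 'p gform set
    \<Rightarrow> ('p, 'w) kmodel \<Rightarrow> 'w \<Rightarrow> 'p gform set" where
  "build_conjuncts Pi a k0 T M w =
       {tau_eps Pi M w}
     \<union> {GDiaEq al l t | al l t. al \<in> {1..a} \<and> 1 \<le> l \<and> l \<le> k0 al - 1 \<and> t \<in> T
                                  \<and> holds M w (GDiaEq al l t)}
     \<union> {GDia al (k0 al) t | al t. al \<in> {1..a} \<and> t \<in> T \<and> holds M w (GDia al (k0 al) t)}
     \<union> {GDiaEq al (card (nbh M al w)) GTop | al. al \<in> {1..a} \<and> k0 al > card (nbh M al w)}"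

lemma build_eq_canon_conj: "build Pi a k0 T M x = canon_conj (build_conjuncts Pi a k0 T M x)"
  by (simp add: build_def build_conjuncts_def)

definition diamond_conjuncts :: "nat \<Rightarrow> (nat \<Rightarrow> nat) \<Rightarrow> 'p gform set \<Rightarrow> 'p gform set" where
  "diamond_conjuncts a k0 T =
     (\<lambda>(al, l, t). GDiaEq al l t) ` (SIGMA al:{1..a}. {..k0 al} \<times> insert GTop T)
     \<union> (\<lambda>(al, t). GDia al (k0 al) t) ` ({1..a} \<times> T)"

lemma finite_diamond_conjuncts: "finite T \<Longrightarrow> finite (diamond_conjuncts a k0 T)"
  unfolding diamond_conjuncts_def by (intro finite_UnI finite_imageI finite_SigmaI) auto

lemma build_conjuncts_subset:
  "build_conjuncts Pi a k0 T M x \<subseteq> insert (tau_eps Pi M x) (diamond_conjuncts a k0 T)"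
proof
  fix \<phi> assume "\<phi> \<in> build_conjuncts Pi a k0 T M x"
  then consider "\<phi> = tau_eps Pi M x"
    | al l t where "\<phi> = GDiaEq al l t" "al \<in> {1..a}" "l \<le> k0 al" "t \<in> insert GTop T"
    | al t where "\<phi> = GDia al (k0 al) t" "al \<in> {1..a}" "t \<in> T"
    unfolding build_conjuncts_def by fastforce
  then show "\<phi> \<in> insert (tau_eps Pi M x) (diamond_conjuncts a k0 T)"
  proof cases
    case (2 al l t)
    then show ?thesis unfolding diamond_conjuncts_def
      by (intro insertI2 UnI1 rev_image_eqI[of "(al, l, t)"]) simp_all
  next
    case (3 al t)
    then show ?thesis unfolding diamond_conjuncts_def
      by (intro insertI2 UnI2 rev_image_eqI[of "(al, t)"]) simp_all
  qed simp
qed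

lemma finite_build_conjuncts: "finite T \<Longrightarrow> finite (build_conjuncts Pi a k0 T M x)"
  using build_conjuncts_subset finite_diamond_conjuncts by (metis finite_insert finite_subset)

lemma holds_build_iff:
  "finite T \<Longrightarrow> holds N y (build Pi a k0 T M x) \<longleftrightarrow> (\<forall>\<phi>\<in>build_conjuncts Pi a k0 T M x. holds N y \<phi>)"
  by (simp add: build_eq_canon_conj holds_canon_conj finite_build_conjuncts)

lemma holds_build_conjunct:
  assumes "finite T" "holds N y (build Pi a k0 T M x)" "\<phi> \<in> build_conjuncts Pi a k0 T M x"
  shows "holds N y \<phi>"
proof -
  have "\<forall>\<phi>\<in>build_conjuncts Pi a k0 T M x. holds N y \<phi>"
    using assms(2) by (simp only: holds_build_iff[OF assms(1)])
  then show ?thesis using assms(3) by (rule bspec)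
qed

lemma holds_build:
  assumes Pi: "finite Pi" and T: "finite T"
  shows "holds M x (build Pi a k0 T M x)"
  unfolding holds_build_iff[OF T]
proof
  fix \<phi> assume "\<phi> \<in> build_conjuncts Pi a k0 T M x"
  then show "holds M x \<phi>" unfolding build_conjuncts_def
  proof (elim UnE)
    assume "\<phi> \<in> {tau_eps Pi M x}"
    then show ?thesis by (simp add: holds_tau_eps_iff[OF Pi])
  next
    assume "\<phi> \<in> {GDiaEq al (card (nbh M al x)) GTop | al. al \<in> {1..a} \<and> k0 al > card (nbh M al x)}"
    then obtain al where "\<phi> = GDiaEq al (card (nbh M al x)) GTop" by blast
    then show ?thesis by (simp add: holds_GDiaEq)
  qed blast+
qed

lemma wf_depth_diamond_conjuncts:
  assumes "\<phi> \<in> diamond_conjuncts a k0 T" and "\<forall>t\<in>T. wf_gform Pi a t \<and> gform_depth t \<le> d"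
  shows "wf_gform Pi a \<phi> \<and> gform_depth \<phi> \<le> Suc d"
  using assms unfolding diamond_conjuncts_def by (elim UnE imageE) (force simp: GDiaEq_def)+

lemma wf_depth_build:
  assumes "\<forall>t\<in>T. wf_gform Pi a t \<and> gform_depth t \<le> d"
  shows "wf_gform Pi a (build Pi a k0 T M x) \<and> gform_depth (build Pi a k0 T M x) \<le> Suc d"
proof -
  have "wf_gform Pi a \<phi> \<and> gform_depth \<phi> \<le> Suc d" if "\<phi> \<in> build_conjuncts Pi a k0 T M x" for \<phi>
    using subsetD[OF build_conjuncts_subset that] wf_depth_diamond_conjuncts[OF _ assms]
    by (auto simp: wf_tau_eps depth_tau_eps)
  then show ?thesis unfolding build_eq_canon_conj
    by (auto intro: wf_canon_conj depth_canon_conj)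
qed

lemma build_eqI:
  assumes "true_atoms Pi M x = true_atoms Pi N y"
    and "\<forall>al\<in>{1..a}. card (nbh M al x) = card (nbh N al y)"
    and "\<forall>al\<in>{1..a}. \<forall>t\<in>T. succ_card M al x t = succ_card N al y t"
  shows "build Pi a k0 T M x = build Pi a k0 T N y"
proof -
  have diamonds_eq: "{GDiaEq al l t | al l t. al \<in> {1..a} \<and> 1 \<le> l \<and> l \<le> k0 al - 1 \<and> t \<in> T
           \<and> holds M x (GDiaEq al l t)}
      = {GDiaEq al l t | al l t. al \<in> {1..a} \<and> 1 \<le> l \<and> l \<le> k0 al - 1 \<and> t \<in> T
           \<and> holds N y (GDiaEq al l t)}"
    by (intro Collect_cong ex_cong1) (use assms(3) in \<open>auto simp: holds_GDiaEq\<close>)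
  have diamonds_ge: "{GDia al (k0 al) t | al t. al \<in> {1..a} \<and> t \<in> T \<and> holds M x (GDia al (k0 al) t)}
      = {GDia al (k0 al) t | al t. al \<in> {1..a} \<and> t \<in> T \<and> holds N y (GDia al (k0 al) t)}"
    by (intro Collect_cong ex_cong1) (use assms(3) in auto)
  have degrees: "{GDiaEq al (card (nbh M al x)) GTop | al. al \<in> {1..a} \<and> k0 al > card (nbh M al x)}
      = {GDiaEq al (card (nbh N al y)) GTop | al. al \<in> {1..a} \<and> k0 al > card (nbh N al y)}"
    by (intro Collect_cong ex_cong1) (use assms(2) in auto)
  show ?thesis
    unfolding build_def tau_eps_eqI[OF assms(1)] diamonds_eq diamonds_ge degrees by (rule refl)
qed

lemma finite_Ttypes_Nil:
  fixes Pi :: "'p::countable set"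
  assumes "finite Pi"
  shows "finite (Ttypes Pi a [])"
proof -
  have "Ttypes Pi a [] \<subseteq> canon_conj ` Pow (GAtom ` Pi \<union> GNeg ` GAtom ` Pi)"
  proof
    fix t assume "t \<in> Ttypes Pi a []"
    then obtain M :: "('p, nat) kmodel" and w where t: "t = tau_eps Pi M w" by auto
    show "t \<in> canon_conj ` Pow (GAtom ` Pi \<union> GNeg ` GAtom ` Pi)"
      unfolding t tau_eps_eq_canon_conj by (rule imageI[OF PowI[OF literals_subset]])
  qed
  then show ?thesis using assms by (meson finite_Pow_iff finite_UnI finite_imageI finite_subset)
qed

lemma finite_Ttypes:
  fixes Pi :: "'p::countable set"
  shows "finite Pi \<Longrightarrow> finite (Ttypes Pi a ks)"
proof (induction ks)
  case Nil
  then show ?case by (rule finite_Ttypes_Nil)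
next
  case (Cons k0 ks)
  have "Ttypes Pi a (k0 # ks) \<subseteq> canon_conj ` Pow (Ttypes Pi a [] \<union> diamond_conjuncts a k0 (Ttypes Pi a ks))"
  proof
    fix t assume "t \<in> Ttypes Pi a (k0 # ks)"
    then obtain M :: "('p, nat) kmodel" and w where M: "is_model Pi a M" "w \<in> Wor M"
      and t: "t = build Pi a k0 (Ttypes Pi a ks) M w" by auto
    have "tau_eps Pi M w \<in> Ttypes Pi a []" using M by (simp only: Ttypes.simps) blast
    then have "build_conjuncts Pi a k0 (Ttypes Pi a ks) M w
        \<subseteq> Ttypes Pi a [] \<union> diamond_conjuncts a k0 (Ttypes Pi a ks)"
      using build_conjuncts_subset[of Pi a k0 "Ttypes Pi a ks" M w] by blast
    then show "t \<in> canon_conj ` Pow (Ttypes Pi a [] \<union> diamond_conjuncts a k0 (Ttypes Pi a ks))"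
      unfolding t build_eq_canon_conj by blast
  qed
  moreover have "finite (Ttypes Pi a [] \<union> diamond_conjuncts a k0 (Ttypes Pi a ks))"
    using Cons finite_diamond_conjuncts finite_Ttypes_Nil by blast
  ultimately show ?case using finite_subset by blast
qed

lemma wf_depth_Ttypes:
  fixes Pi :: "'p::countable set"
  shows "t \<in> Ttypes Pi a ks \<Longrightarrow> wf_gform Pi a t \<and> gform_depth t \<le> length ks"
proof (induction ks arbitrary: t)
  case Nil
  then obtain M :: "('p, nat) kmodel" and w where "t = tau_eps Pi M w" by auto
  then show ?case by (simp add: wf_tau_eps depth_tau_eps)
next
  case (Cons k0 ks)
  then obtain M :: "('p, nat) kmodel" and w where "t = build Pi a k0 (Ttypes Pi a ks) M w" by auto
  then show ?case using wf_depth_build[of "Ttypes Pi a ks" Pi a "length ks"] Cons.IH by simp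
qed

lemma holds_tau: "finite Pi \<Longrightarrow> holds M x (tau Pi a ks M x)"
  by (cases ks) (simp_all add: holds_tau_eps_iff holds_build finite_Ttypes)

lemma tau_eq_if_modal_equiv:
  assumes "modal_equiv Pi a (length ks) M x N y"
  shows "tau Pi a ks M x = tau Pi a ks N y"
proof -
  have "holds M x (GAtom p) = holds N y (GAtom p)" if "p \<in> Pi" for p
    using assms that unfolding modal_equiv_def by (metis gform_depth.simps(2) wf_gform.simps(2) zero_le)
  then have atoms: "true_atoms Pi M x = true_atoms Pi N y" by auto
  show ?thesis
  proof (cases ks)
    case Nil
    then show ?thesis using tau_eps_eqI[OF atoms] by simp
  next
    case (Cons k0 ks')
    have equiv: "holds M x \<phi> = holds N y \<phi>"
      if "wf_gform Pi a \<phi>" "gform_depth \<phi> \<le> Suc (length ks')" for \<phi>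
      using assms that Cons by (simp add: modal_equiv_def)
    have "card (nbh M al x) = card (nbh N al y)" if "al \<in> {1..a}" for al
    proof -
      have "succ_card M al x GTop = succ_card N al y GTop"
        by (intro succ_card_eqI allI equiv) (use that in simp_all)
      then show ?thesis by simp
    qed
    moreover have "succ_card M al x t = succ_card N al y t"
      if "al \<in> {1..a}" "t \<in> Ttypes Pi a ks'" for al t
    proof -
      have t: "wf_gform Pi a t \<and> gform_depth t \<le> length ks'" by (rule wf_depth_Ttypes[OF that(2)])
      show ?thesis by (intro succ_card_eqI allI equiv) (use t that(1) in simp_all)
    qed
    ultimately have "build Pi a k0 (Ttypes Pi a ks') M x = build Pi a k0 (Ttypes Pi a ks') N y"
      by (intro build_eqI[OF atoms] ballI)
    then show ?thesis using Cons by simp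
  qed
qed

definition map_kmodel :: "('w \<Rightarrow> 'u) \<Rightarrow> ('p, 'w) kmodel \<Rightarrow> ('p, 'u) kmodel" where
  "map_kmodel f M = (f ` Wor M, \<lambda>al. map_prod f f ` (Rel M al \<inter> Wor M \<times> Wor M),
     \<lambda>p. f ` (Val M p \<inter> Wor M))"

lemma Wor_map_kmodel: "Wor (map_kmodel f M) = f ` Wor M"
  by (simp add: map_kmodel_def Wor_def)

lemma is_model_map_kmodel: "is_model Pi a M \<Longrightarrow> is_model Pi a (map_kmodel f M)"
  by (auto simp: is_model_def map_kmodel_def Wor_def Rel_def Val_def)

lemma Val_map_kmodel:
  "inj_on f (Wor M) \<Longrightarrow> x \<in> Wor M \<Longrightarrow> f x \<in> Val (map_kmodel f M) p \<longleftrightarrow> x \<in> Val M p"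
  by (auto simp: map_kmodel_def Val_def inj_on_def)

lemma nbh_map_kmodel:
  assumes "inj_on f (Wor M)" "x \<in> Wor M"
  shows "nbh (map_kmodel f M) al (f x) = f ` (nbh M al x \<inter> Wor M)"
  using assms by (auto simp: nbh_def map_kmodel_def Rel_def inj_on_def)

lemma holds_map_kmodel:
  assumes M: "is_model Pi a M" and f: "inj_on f (Wor M)"
  shows "wf_gform Pi a \<phi> \<Longrightarrow> x \<in> Wor M \<Longrightarrow> holds (map_kmodel f M) (f x) \<phi> = holds M x \<phi>"
proof (induction \<phi> arbitrary: x)
  case (GAtom p)
  then show ?case using Val_map_kmodel[OF f] by simp
next
  case (GDia al k \<psi>)
  let ?S = "{u \<in> nbh M al x. holds M u \<psi>}"
  have al: "al \<in> {1..a}" and wf: "wf_gform Pi a \<psi>" using GDia.prems(1) by simp_all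
  have sub: "nbh M al x \<subseteq> Wor M" by (rule nbh_subset_Wor[OF M al])
  have "{u \<in> nbh (map_kmodel f M) al (f x). holds (map_kmodel f M) u \<psi>} = f ` ?S"
    using sub GDia.IH[OF wf]
    by (auto simp: nbh_map_kmodel[OF f GDia.prems(2)] Int_absorb2 image_iff)
  moreover have "inj_on f ?S" using f sub by (blast intro: inj_on_subset)
  ultimately show ?case by (simp add: card_image)
qed simp_all

lemma tau_in_Ttypes:
  fixes M :: "('p::countable, 'w) kmodel"
  assumes M: "is_model Pi a M" and x: "x \<in> Wor M"
  shows "tau Pi a ks M x \<in> Ttypes Pi a ks"
proof -
  obtain f :: "'w \<Rightarrow> nat" where f: "inj_on f (Wor M)"
    using finite_imp_inj_to_nat_seg M unfolding is_model_def by metis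
  let ?M' = "map_kmodel f M"
  have "modal_equiv Pi a (length ks) M x ?M' (f x)"
    using holds_map_kmodel[OF M f] x by (simp add: modal_equiv_def)
  then have "tau Pi a ks M x = tau Pi a ks ?M' (f x)" by (rule tau_eq_if_modal_equiv)
  moreover have "is_model Pi a ?M'" "f x \<in> Wor ?M'"
    using is_model_map_kmodel[OF M] x by (simp_all add: Wor_map_kmodel)
  ultimately show ?thesis
    by (cases ks) (simp_all only: Ttypes.simps tau.simps, blast+)
qed

definition widths_exceed_degrees :: "nat \<Rightarrow> (nat \<Rightarrow> nat) list \<Rightarrow> ('p, 'w) kmodel \<Rightarrow> bool" where
  "widths_exceed_degrees a ks M \<longleftrightarrow> (\<forall>k\<in>set ks. \<forall>al\<in>{1..a}. \<forall>x. card (nbh M al x) < k al)"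

lemma widths_exceed_degrees_Cons:
  "widths_exceed_degrees a (k0 # ks) M \<longleftrightarrow>
     (\<forall>al\<in>{1..a}. \<forall>x. card (nbh M al x) < k0 al) \<and> widths_exceed_degrees a ks M"
  by (auto simp: widths_exceed_degrees_def)

lemma widths_exceed_degrees_replicate:
  assumes "is_model Pi a M" "card (Wor M) < K"
  shows "widths_exceed_degrees a (replicate n (\<lambda>_. K)) M"
  using le_less_trans[OF card_nbh_le[OF assms(1)] assms(2)] by (simp add: widths_exceed_degrees_def)

lemma true_atoms_if_holds_build:
  assumes "finite Pi" "finite T" "holds N y (build Pi a k0 T M x)"
  shows "true_atoms Pi N y = true_atoms Pi M x"
proof -
  have "tau_eps Pi M x \<in> build_conjuncts Pi a k0 T M x" by (simp add: build_conjuncts_def)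
  then have "holds N y (tau_eps Pi M x)" by (rule holds_build_conjunct[OF assms(2,3)])
  then show ?thesis by (simp add: holds_tau_eps_iff[OF assms(1)])
qed

lemma card_nbh_if_holds_build:
  assumes "finite T" "holds N y (build Pi a k0 T M x)"
    and "al \<in> {1..a}" "card (nbh M al x) < k0 al"
  shows "card (nbh N al y) = card (nbh M al x)"
proof -
  have "GDiaEq al (card (nbh M al x)) GTop \<in> build_conjuncts Pi a k0 T M x"
    using assms(3,4) unfolding build_conjuncts_def by blast
  then have "holds N y (GDiaEq al (card (nbh M al x)) GTop)"
    by (rule holds_build_conjunct[OF assms(1,2)])
  then show ?thesis by (simp add: holds_GDiaEq)
qed

lemma succ_card_zero_or_eq_if_holds_build:
  assumes T: "finite T" and hold: "holds N y (build Pi a k0 T M x)"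
    and al: "al \<in> {1..a}" and t: "t \<in> T"
    and fin: "finite (nbh N al y)" and deg: "card (nbh N al y) < k0 al"
  shows "succ_card M al x t = 0 \<or> succ_card M al x t = succ_card N al y t"
proof -
  note conjunct = holds_build_conjunct[OF T hold]
  have "succ_card N al y t \<le> card (nbh N al y)" by (rule card_mono) (use fin in auto)
  then have N_less: "succ_card N al y t < k0 al" using deg by linarith
  have M_less: "succ_card M al x t < k0 al"
  proof (rule ccontr)
    assume "\<not> ?thesis"
    then have "holds M x (GDia al (k0 al) t)" by simp
    then have "GDia al (k0 al) t \<in> build_conjuncts Pi a k0 T M x"
      using al t unfolding build_conjuncts_def by blast
    then have "holds N y (GDia al (k0 al) t)" by (rule conjunct)
    then show False using N_less by simp
  qed
  show ?thesis
  proof (cases "succ_card M al x t = 0")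
    case False
    have "holds M x (GDiaEq al (succ_card M al x t) t)" by (simp add: holds_GDiaEq)
    moreover have "1 \<le> succ_card M al x t" "succ_card M al x t \<le> k0 al - 1"
      using False M_less by linarith+
    ultimately have "GDiaEq al (succ_card M al x t) t \<in> build_conjuncts Pi a k0 T M x"
      using al t unfolding build_conjuncts_def by blast
    then have "holds N y (GDiaEq al (succ_card M al x t) t)" by (rule conjunct)
    then show ?thesis by (simp add: holds_GDiaEq)
  qed simp
qed

(* Every successor of x satisfies some type in Ttypes Pi a ks, whereas by excl every successor of y
   satisfies at most one; comparing the total counts turns the per-type inequalities into equalities. *)
lemma succ_card_eq_if_holds_build:
  assumes Pi: "finite Pi" and M: "is_model Pi a M" and N: "is_model Pi a N"
    and al: "al \<in> {1..a}" and deg: "card (nbh N al y) < k0 al"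
    and excl: "\<And>u t. t \<in> Ttypes Pi a ks \<Longrightarrow> holds N u t \<Longrightarrow> tau Pi a ks N u = t"
    and hold: "holds N y (build Pi a k0 (Ttypes Pi a ks) M x)"
  shows "card (nbh M al x) = card (nbh N al y)
    \<and> (\<forall>t\<in>Ttypes Pi a ks. succ_card M al x t = succ_card N al y t)"
proof -
  let ?T = "Ttypes Pi a ks"
  have T: "finite ?T" by (rule finite_Ttypes[OF Pi])
  have finM: "finite (nbh M al x)" by (rule finite_nbh[OF M al])
  have finN: "finite (nbh N al y)" by (rule finite_nbh[OF N al])
  have le: "succ_card M al x t \<le> succ_card N al y t" if "t \<in> ?T" for t
    using succ_card_zero_or_eq_if_holds_build[OF T hold al that finN deg] by auto
  have cover: "card (nbh M al x) \<le> (\<Sum>t\<in>?T. succ_card M al x t)"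
  proof (rule card_le_sum_card_filter[OF finM T], rule ballI)
    fix u assume "u \<in> nbh M al x"
    then have "u \<in> Wor M" using nbh_subset_Wor[OF M al] by blast
    then show "\<exists>t\<in>?T. holds M u t" using tau_in_Ttypes[OF M, of u ks] holds_tau[OF Pi, of M u a ks] by blast
  qed
  have sums: "(\<Sum>t\<in>?T. succ_card M al x t) \<le> (\<Sum>t\<in>?T. succ_card N al y t)"
    by (rule sum_mono) (rule le)
  have "(\<Sum>t\<in>?T. succ_card N al y t) = (\<Sum>t\<in>?T. card {u \<in> nbh N al y. tau Pi a ks N u = t})"
    by (intro sum.cong refl arg_cong[where f = card] Collect_cong conj_cong)
      (metis excl holds_tau[OF Pi])
  also have "\<dots> \<le> card (nbh N al y)" by (rule sum_card_fibers_le[OF finN T])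
  finally have disjoint: "(\<Sum>t\<in>?T. succ_card N al y t) \<le> card (nbh N al y)" .
  have card_eq: "card (nbh N al y) = card (nbh M al x)"
    by (rule card_nbh_if_holds_build[OF T hold al]) (use cover sums disjoint deg in linarith)
  then have sum_eq: "(\<Sum>t\<in>?T. succ_card M al x t) = (\<Sum>t\<in>?T. succ_card N al y t)"
    using cover sums disjoint by linarith
  have "succ_card M al x t = succ_card N al y t" if "t \<in> ?T" for t
    by (rule sum_mono_inv[where f = "succ_card M al x" and g = "succ_card N al y", OF sum_eq le that T])
  with card_eq show ?thesis by simp
qed

lemma tau_eq_if_holds:
  fixes N :: "('p::countable, 'w) kmodel"
  assumes Pi: "finite Pi" and N: "is_model Pi a N"
  shows "widths_exceed_degrees a ks N \<Longrightarrow> t \<in> Ttypes Pi a ks \<Longrightarrow> holds N y t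
    \<Longrightarrow> tau Pi a ks N y = t"
proof (induction ks arbitrary: y t)
  case Nil
  then obtain M :: "('p, nat) kmodel" and x where t: "t = tau_eps Pi M x" by auto
  then have "holds N y (tau_eps Pi M x)" using Nil.prems(3) by simp
  then have "true_atoms Pi N y = true_atoms Pi M x" by (simp add: holds_tau_eps_iff[OF Pi])
  then have "tau_eps Pi N y = tau_eps Pi M x" by (rule tau_eps_eqI)
  then show ?case by (simp add: t)
next
  case (Cons k0 ks)
  let ?T = "Ttypes Pi a ks"
  obtain M :: "('p, nat) kmodel" and x where M: "is_model Pi a M"
    and t: "t = build Pi a k0 ?T M x"
    using Cons.prems(2) by auto
  have deg: "card (nbh N al y) < k0 al" if "al \<in> {1..a}" for al
    using Cons.prems(1) that by (simp add: widths_exceed_degrees_Cons)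
  have excl: "tau Pi a ks N u = s" if "s \<in> ?T" "holds N u s" for u s
    using Cons.prems(1) that by (intro Cons.IH) (simp_all add: widths_exceed_degrees_Cons)
  have hold: "holds N y (build Pi a k0 ?T M x)" using Cons.prems(3) t by simp
  have counts: "card (nbh M al x) = card (nbh N al y)
      \<and> (\<forall>s\<in>?T. succ_card M al x s = succ_card N al y s)" if "al \<in> {1..a}" for al
    by (rule succ_card_eq_if_holds_build[OF Pi M N that deg[OF that] excl hold])
  have atoms: "true_atoms Pi M x = true_atoms Pi N y"
    using true_atoms_if_holds_build[OF Pi finite_Ttypes[OF Pi] hold] by simp
  have "build Pi a k0 ?T M x = build Pi a k0 ?T N y"
    by (intro build_eqI[OF atoms] ballI) (use counts in blast)+
  then show ?case using t by simp
qed

lemma true_atoms_eq_if_tau_eq: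
  assumes Pi: "finite Pi" and eq: "tau Pi a ks M x = tau Pi a ks N y"
  shows "true_atoms Pi M x = true_atoms Pi N y"
proof -
  have hold: "holds N y (tau Pi a ks M x)" using holds_tau[OF Pi, of N y a ks] eq by simp
  show ?thesis
  proof (cases ks)
    case Nil
    then show ?thesis using hold by (simp add: holds_tau_eps_iff[OF Pi])
  next
    case (Cons k0 ks')
    then have "holds N y (build Pi a k0 (Ttypes Pi a ks') M x)" using hold by simp
    then have "true_atoms Pi N y = true_atoms Pi M x"
      by (rule true_atoms_if_holds_build[OF Pi finite_Ttypes[OF Pi]])
    then show ?thesis by simp
  qed
qed

lemma image_mset_tau_nbh_eq:
  assumes Pi: "finite Pi" and M: "is_model Pi a M" and N: "is_model Pi a N"
    and degM: "widths_exceed_degrees a (k0 # ks) M" and degN: "widths_exceed_degrees a (k0 # ks) N"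
    and eq: "tau Pi a (k0 # ks) M x = tau Pi a (k0 # ks) N y" and al: "al \<in> {1..a}"
  shows "image_mset (tau Pi a ks M) (mset_set (nbh M al x))
       = image_mset (tau Pi a ks N) (mset_set (nbh N al y))"
proof (rule multiset_eqI)
  fix t
  let ?T = "Ttypes Pi a ks"
  have finM: "finite (nbh M al x)" by (rule finite_nbh[OF M al])
  have finN: "finite (nbh N al y)" by (rule finite_nbh[OF N al])
  have "card {u \<in> nbh M al x. tau Pi a ks M u = t} = card {u \<in> nbh N al y. tau Pi a ks N u = t}"
  proof (cases "t \<in> ?T")
    case True
    have T: "finite ?T" by (rule finite_Ttypes[OF Pi])
    have holdM: "holds M x (build Pi a k0 ?T N y)"
      using holds_tau[OF Pi, of M x a "k0 # ks"] eq by simp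
    have holdN: "holds N y (build Pi a k0 ?T M x)"
      using holds_tau[OF Pi, of N y a "k0 # ks"] eq by simp
    have "card (nbh M al x) < k0 al" "card (nbh N al y) < k0 al"
      using degM degN al by (simp_all add: widths_exceed_degrees_Cons)
    then have "succ_card M al x t = 0 \<or> succ_card M al x t = succ_card N al y t"
      "succ_card N al y t = 0 \<or> succ_card N al y t = succ_card M al x t"
      using succ_card_zero_or_eq_if_holds_build[OF T holdN al True finN]
        succ_card_zero_or_eq_if_holds_build[OF T holdM al True finM] by simp_all
    then have "succ_card M al x t = succ_card N al y t" by auto
    moreover have "widths_exceed_degrees a ks M" "widths_exceed_degrees a ks N"
      using degM degN by (simp_all add: widths_exceed_degrees_Cons)
    then have "holds M u t \<longleftrightarrow> tau Pi a ks M u = t" "holds N v t \<longleftrightarrow> tau Pi a ks N v = t" for u v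
      using tau_eq_if_holds[OF Pi M _ True] tau_eq_if_holds[OF Pi N _ True]
        holds_tau[OF Pi, of M u a ks] holds_tau[OF Pi, of N v a ks] by blast+
    ultimately show ?thesis by simp
  next
    case False
    then have empty: "{u \<in> nbh M al x. tau Pi a ks M u = t} = {}" "{u \<in> nbh N al y. tau Pi a ks N u = t} = {}"
      using tau_in_Ttypes[OF M] tau_in_Ttypes[OF N] nbh_subset_Wor[OF M al] nbh_subset_Wor[OF N al]
      by blast+
    then show ?thesis by (simp only: empty card.empty)
  qed
  then show "count (image_mset (tau Pi a ks M) (mset_set (nbh M al x))) t
      = count (image_mset (tau Pi a ks N) (mset_set (nbh N al y))) t"
    by (simp add: count_image_mset_mset_set finM finN)
qed

lemma run_Suc_eqI:
  assumes "run Pi a pi delta M t x = run Pi a pi delta N t y"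
    and "\<forall>al\<in>{1..a}. image_mset (run Pi a pi delta M t) (mset_set (nbh M al x))
                    = image_mset (run Pi a pi delta N t) (mset_set (nbh N al y))"
  shows "run Pi a pi delta M (Suc t) x = run Pi a pi delta N (Suc t) y"
proof -
  have maps: "map (\<lambda>al. image_mset (run Pi a pi delta M t) (mset_set (nbh M al x))) [1..<Suc a]
      = map (\<lambda>al. image_mset (run Pi a pi delta N t) (mset_set (nbh N al y))) [1..<Suc a]"
    using assms(2) by (intro map_cong refl) auto
  show ?thesis by (simp only: run.simps maps assms(1))
qed

lemma run_eq_if_tau_eq:
  assumes Pi: "finite Pi" and M: "is_model Pi a M" and N: "is_model Pi a N"
  shows "widths_exceed_degrees a ks M \<Longrightarrow> widths_exceed_degrees a ks N
    \<Longrightarrow> tau Pi a ks M x = tau Pi a ks N y \<Longrightarrow> t \<le> length ks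
    \<Longrightarrow> run Pi a pi delta M t x = run Pi a pi delta N t y"
proof (induction t arbitrary: ks x y)
  case 0
  then show ?case using true_atoms_eq_if_tau_eq[OF Pi, of a ks M x N y] by simp
next
  case (Suc t)
  then obtain k0 ks' where ks: "ks = k0 # ks'" and t: "t \<le> length ks'" by (cases ks) auto
  have degs: "widths_exceed_degrees a ks' M" "widths_exceed_degrees a ks' N"
    using Suc.prems(1,2) ks by (simp_all add: widths_exceed_degrees_Cons)
  show ?case
  proof (rule run_Suc_eqI)
    show "run Pi a pi delta M t x = run Pi a pi delta N t y"
      using Suc.IH Suc.prems by simp
    show "\<forall>al\<in>{1..a}. image_mset (run Pi a pi delta M t) (mset_set (nbh M al x))
        = image_mset (run Pi a pi delta N t) (mset_set (nbh N al y))"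
    proof
      fix al assume al: "al \<in> {1..a}"
      show "image_mset (run Pi a pi delta M t) (mset_set (nbh M al x))
          = image_mset (run Pi a pi delta N t) (mset_set (nbh N al y))"
      proof (rule image_mset_eq_factor)
        show "image_mset (tau Pi a ks' M) (mset_set (nbh M al x))
            = image_mset (tau Pi a ks' N) (mset_set (nbh N al y))"
          by (rule image_mset_tau_nbh_eq[OF Pi M N _ _ _ al]) (use Suc.prems ks in simp_all)
      qed (rule Suc.IH[OF degs _ t])
    qed
  qed
qed

definition univ_init :: "'p::countable set \<Rightarrow> nat" where
  "univ_init S = to_nat (sorted_list_of_set (to_nat ` S))"

definition univ_step :: "nat multiset list \<Rightarrow> nat \<Rightarrow> nat" where
  "univ_step Ns q = to_nat (map sorted_list_of_multiset Ns, q)"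

abbreviation univ_run :: "'p::countable set \<Rightarrow> nat \<Rightarrow> ('p, 'w) kmodel \<Rightarrow> nat \<Rightarrow> 'w \<Rightarrow> nat" where
  "univ_run Pi a M \<equiv> run Pi a univ_init univ_step M"

lemma univ_init_eq_iff:
  assumes "finite S" "finite S'"
  shows "univ_init S = univ_init S' \<longleftrightarrow> S = S'"
proof
  assume "univ_init S = univ_init S'"
  then have "set (sorted_list_of_set (to_nat ` S)) = set (sorted_list_of_set (to_nat ` S'))"
    by (simp add: univ_init_def)
  then have "to_nat ` S = to_nat ` S'" using assms by simp
  then show "S = S'" by (simp add: inj_image_eq_iff)
qed simp

lemma univ_step_eq_iff: "univ_step Ns q = univ_step Ns' q' \<longleftrightarrow> Ns = Ns' \<and> q = q'"
proof -
  have "inj (sorted_list_of_multiset :: nat multiset \<Rightarrow> nat list)"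
    by (metis injI mset_sorted_list_of_multiset)
  then show ?thesis by (auto simp: univ_step_def inj_map_eq_map)
qed

lemma is_cmpa_univ: "is_cmpa Pi a (univ_init, univ_step) UNIV {}"
  by (simp add: is_cmpa_def)

lemma univ_run_Suc_eqD:
  assumes "univ_run Pi a M (Suc d) x = univ_run Pi a N (Suc d) y"
  shows "univ_run Pi a M d x = univ_run Pi a N d y"
    and "\<forall>al\<in>{1..a}. image_mset (univ_run Pi a M d) (mset_set (nbh M al x))
                    = image_mset (univ_run Pi a N d) (mset_set (nbh N al y))"
proof -
  have maps: "map (\<lambda>al. image_mset (univ_run Pi a M d) (mset_set (nbh M al x))) [1..<Suc a]
      = map (\<lambda>al. image_mset (univ_run Pi a N d) (mset_set (nbh N al y))) [1..<Suc a]"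
    and "univ_run Pi a M d x = univ_run Pi a N d y"
    using assms by (simp_all only: run.simps univ_step_eq_iff)
  then show "univ_run Pi a M d x = univ_run Pi a N d y" by blast
  have "\<forall>al\<in>set [1..<Suc a]. image_mset (univ_run Pi a M d) (mset_set (nbh M al x))
                    = image_mset (univ_run Pi a N d) (mset_set (nbh N al y))"
    using maps by (simp only: map_eq_conv)
  then show "\<forall>al\<in>{1..a}. image_mset (univ_run Pi a M d) (mset_set (nbh M al x))
                    = image_mset (univ_run Pi a N d) (mset_set (nbh N al y))"
    by (simp only: set_upt atLeastLessThanSuc_atLeastAtMost)
qed

lemma univ_run_eq_mono:
  "d' \<le> d \<Longrightarrow> univ_run Pi a M d x = univ_run Pi a N d y \<Longrightarrow> univ_run Pi a M d' x = univ_run Pi a N d' y"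
proof (induction d)
  case (Suc d)
  show ?case
  proof (cases "d' = Suc d")
    case False
    then have "d' \<le> d" using Suc.prems(1) by simp
    moreover have "univ_run Pi a M d x = univ_run Pi a N d y"
      by (rule univ_run_Suc_eqD(1)[OF Suc.prems(2)])
    ultimately show ?thesis by (rule Suc.IH)
  qed (use Suc.prems in simp)
qed simp

lemma modal_equiv_if_univ_run_eq:
  assumes Pi: "finite Pi" and M: "is_model Pi a M" and N: "is_model Pi a N"
    and eq: "univ_run Pi a M d x = univ_run Pi a N d y"
  shows "modal_equiv Pi a d M x N y"
proof -
  have "holds M x \<phi> = holds N y \<phi>"
    if "wf_gform Pi a \<phi>" "gform_depth \<phi> \<le> d" "univ_run Pi a M d x = univ_run Pi a N d y" for \<phi> d x y
    using that
  proof (induction \<phi> arbitrary: d x y)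
    case (GAtom p)
    have "univ_run Pi a M 0 x = univ_run Pi a N 0 y"
      using univ_run_eq_mono[OF _ GAtom.prems(3)] by blast
    then have "true_atoms Pi M x = true_atoms Pi N y" using Pi by (simp add: univ_init_eq_iff)
    then show ?case using GAtom.prems(1) by auto
  next
    case (GDia al k \<psi>)
    have al: "al \<in> {1..a}" and wf: "wf_gform Pi a \<psi>" using GDia.prems(1) by simp_all
    obtain d' where d: "d = Suc d'" and depth: "gform_depth \<psi> \<le> d'"
      using GDia.prems(2) by (cases d) auto
    have msets: "image_mset (univ_run Pi a M d') (mset_set (nbh M al x))
        = image_mset (univ_run Pi a N d') (mset_set (nbh N al y))"
      using univ_run_Suc_eqD(2)[of Pi a M d' x N y] GDia.prems(3) al d by blast
    have "succ_card M al x \<psi> = succ_card N al y \<psi>"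
      by (rule card_filter_eq_if_image_mset_eq[OF finite_nbh[OF M al] finite_nbh[OF N al] msets])
        (rule GDia.IH[OF wf depth])
    then show ?case by simp
  next
    case (GAnd \<phi>1 \<phi>2)
    have "holds M x \<phi>1 = holds N y \<phi>1" by (rule GAnd.IH(1)) (use GAnd.prems in simp_all)
    moreover have "holds M x \<phi>2 = holds N y \<phi>2" by (rule GAnd.IH(2)) (use GAnd.prems in simp_all)
    ultimately show ?case by simp
  qed simp_all
  then show ?thesis using eq unfolding modal_equiv_def by blast
qed

lemma admissible_if_widths_exceed_degrees:
  "widths_exceed_degrees a ks M \<Longrightarrow> admissible a ks M w"
  by (simp add: admissible_def widths_exceed_degrees_def)

theorem lemma2:
  fixes Pi :: "'p::countable set" and a n :: nat
    and M :: "('p, 'w) kmodel" and w :: 'w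
    and N :: "('p, 'v) kmodel" and v :: 'v
  assumes "finite Pi" and "a > 0"
    and "is_model Pi a M" and "w \<in> Wor M"
    and "is_model Pi a N" and "v \<in> Wor N"
  shows "same_full_type Pi a n M w N v \<longleftrightarrow>
    (\<forall>Q pi delta F. is_cmpa Pi a (pi, delta) Q F \<longrightarrow>
       (\<forall>t \<le> n. run Pi a pi delta M t w = run Pi a pi delta N t v))"
proof
  assume same: "same_full_type Pi a n M w N v"
  define ks where "ks = replicate n (\<lambda>_::nat. Suc (card (Wor M) + card (Wor N)))"
  have "widths_exceed_degrees a ks M" "widths_exceed_degrees a ks N"
    unfolding ks_def
    using widths_exceed_degrees_replicate[OF assms(3)] widths_exceed_degrees_replicate[OF assms(5)]
    by simp_all
  moreover from this have "tau Pi a ks M w = tau Pi a ks N v"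
    using same by (simp add: same_full_type_def ks_def admissible_if_widths_exceed_degrees)
  ultimately show "\<forall>Q pi delta F. is_cmpa Pi a (pi, delta) Q F \<longrightarrow>
      (\<forall>t \<le> n. run Pi a pi delta M t w = run Pi a pi delta N t v)"
    using run_eq_if_tau_eq[OF assms(1,3,5)] by (simp add: ks_def)
next
  assume "\<forall>Q pi delta F. is_cmpa Pi a (pi, delta) Q F \<longrightarrow>
      (\<forall>t \<le> n. run Pi a pi delta M t w = run Pi a pi delta N t v)"
  then have "univ_run Pi a M n w = univ_run Pi a N n v" using is_cmpa_univ by blast
  then have "modal_equiv Pi a n M w N v" by (rule modal_equiv_if_univ_run_eq[OF assms(1,3,5)])
  then show "same_full_type Pi a n M w N v"
    by (simp add: same_full_type_def tau_eq_if_modal_equiv)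
qed

end
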